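(* Let $E$ be a symmetric Banach function space on $[0,\alpha)$, $0<\alpha\le\infty$. If $E$ is strictly monotone then $E=E_0$.
   Context: $\mu(f)$ is the decreasing rearrangement of $f$, $\mu(\infty,f)=\lim_{t\to\infty}\mu(t,f)$, and $E_0=\{f\in E:\mu(\infty,f)=0\}$. $E$ is symmetric if $g\in E$, $\mu(f)\le\mu(g)$ imply $f\in E$ and $\|f\|_E\le\|g\|_E$. $E$ is strictly monotone if $0\le f\le g$, $f\ne g$ in $E$ imply $\|f\|_E<\|g\|_E$. *)

theory Defs
  imports "HOL-Analysis.Analysis"
begin

text \<open>The interval [0,alpha) with 0 < alpha \<le> \<infinity> and Lebesgue measure on it.
  Functions are real-valued, E is a set of such functions (identified a.e. via
  the ideal property), N is the norm of E.\<close>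

definition interval0 :: "ereal \<Rightarrow> real set" where
  "interval0 \<alpha> = {x. 0 \<le> x \<and> ereal x < \<alpha>}"

definition lebI :: "ereal \<Rightarrow> real measure" where
  "lebI \<alpha> = restrict_space lborel (interval0 \<alpha>)"

definition rearr :: "real measure \<Rightarrow> (real \<Rightarrow> real) \<Rightarrow> real \<Rightarrow> ennreal" where
  "rearr M f t = Inf {s::ennreal. emeasure M {x \<in> space M. s < ennreal \<bar>f x\<bar>} \<le> ennreal t}"

definition rearr_inf :: "real measure \<Rightarrow> (real \<Rightarrow> real) \<Rightarrow> ennreal" where
  "rearr_inf M f = Lim at_top (rearr M f)"

definition E0 :: "real measure \<Rightarrow> (real \<Rightarrow> real) set \<Rightarrow> (real \<Rightarrow> real) set" where
  "E0 M E = {f \<in> E. rearr_inf M f = 0}"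

definition banach_function_space ::
  "real measure \<Rightarrow> (real \<Rightarrow> real) set \<Rightarrow> ((real \<Rightarrow> real) \<Rightarrow> real) \<Rightarrow> bool" where
  "banach_function_space M E N \<longleftrightarrow>
     E \<subseteq> borel_measurable M \<and>
     (\<lambda>x. 0) \<in> E \<and>
     (\<forall>f\<in>E. \<forall>g\<in>E. (\<lambda>x. f x + g x) \<in> E) \<and>
     (\<forall>f\<in>E. \<forall>c. (\<lambda>x. c * f x) \<in> E) \<and>
     (\<forall>f\<in>E. 0 \<le> N f) \<and>
     (\<forall>f\<in>E. N f = 0 \<longleftrightarrow> (AE x in M. f x = 0)) \<and>
     (\<forall>f\<in>E. \<forall>c. N (\<lambda>x. c * f x) = \<bar>c\<bar> * N f) \<and>
     (\<forall>f\<in>E. \<forall>g\<in>E. N (\<lambda>x. f x + g x) \<le> N f + N g) \<and>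
     (\<forall>f g. g \<in> E \<longrightarrow> f \<in> borel_measurable M \<longrightarrow>
         (AE x in M. \<bar>f x\<bar> \<le> \<bar>g x\<bar>) \<longrightarrow> f \<in> E \<and> N f \<le> N g) \<and>
     (\<forall>u::nat \<Rightarrow> real \<Rightarrow> real. (\<forall>n. u n \<in> E) \<longrightarrow>
         (\<forall>e>0. \<exists>K. \<forall>m\<ge>K. \<forall>n\<ge>K. N (\<lambda>x. u m x - u n x) < e) \<longrightarrow>
         (\<exists>f\<in>E. (\<lambda>n. N (\<lambda>x. u n x - f x)) \<longlonglongrightarrow> 0))"

definition symmetric_space ::
  "real measure \<Rightarrow> (real \<Rightarrow> real) set \<Rightarrow> ((real \<Rightarrow> real) \<Rightarrow> real) \<Rightarrow> bool" where
  "symmetric_space M E N \<longleftrightarrow>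
     (\<forall>f g. g \<in> E \<longrightarrow> f \<in> borel_measurable M \<longrightarrow>
        (\<forall>t\<ge>0. rearr M f t \<le> rearr M g t) \<longrightarrow> f \<in> E \<and> N f \<le> N g)"

definition strictly_monotone ::
  "real measure \<Rightarrow> (real \<Rightarrow> real) set \<Rightarrow> ((real \<Rightarrow> real) \<Rightarrow> real) \<Rightarrow> bool" where
  "strictly_monotone M E N \<longleftrightarrow>
     (\<forall>f\<in>E. \<forall>g\<in>E. (AE x in M. 0 \<le> f x \<and> f x \<le> g x) \<longrightarrow>
        \<not> (AE x in M. f x = g x) \<longrightarrow> N f < N g)"

end

theory Submission
  imports Defs
begin

text \<open>On a finite interval the rearrangement of every function vanishes once t exceeds
  the length of the interval, so E = E0 trivially. On [0,\<infinity>), suppose some f \<in> E has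
  \<mu>(\<infinity>,f) > d > 0. Then \<mu>(f) dominates the constant d, so d \<in> E by symmetry; and
  d\<cdot>\<chi>[1,\<infinity>) has the same rearrangement as d, hence the same norm, although it lies
  strictly below d on [0,1). This contradicts strict monotonicity. None of the Banach
  function space axioms is needed.\<close>

lemma rearr_antimono:
  assumes "t \<le> t'"
  shows "rearr M f t' \<le> rearr M f t"
  unfolding rearr_def
  using order_trans[OF _ ennreal_leI[OF assms]] by (intro Inf_superset_mono) auto

lemma rearr_le:
  assumes "emeasure M {x \<in> space M. s < ennreal \<bar>f x\<bar>} \<le> ennreal t"
  shows "rearr M f t \<le> s"
  unfolding rearr_def using assms by (intro Inf_lower) simp

lemma rearr_const_le: "rearr M (\<lambda>_. c) t \<le> ennreal \<bar>c\<bar>"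
  by (rule rearr_le) simp

lemma rearr_eq_0_if_space_le:
  assumes "emeasure M (space M) \<le> ennreal t"
  shows "rearr M f t = 0"
proof -
  have "emeasure M {x \<in> space M. 0 < ennreal \<bar>f x\<bar>} \<le> emeasure M (space M)"
    by (intro emeasure_mono) auto
  then have "rearr M f t \<le> 0"
    using assms by (intro rearr_le) (rule order_trans)
  then show ?thesis by simp
qed

lemma rearr_eq_if_equimeasurable:
  assumes "\<And>s. emeasure M {x \<in> space M. s < ennreal \<bar>f x\<bar>}
              = emeasure M {x \<in> space M. s < ennreal \<bar>g x\<bar>}"
  shows "rearr M f = rearr M g"
  unfolding rearr_def assms ..

lemma rearr_tendsto_INF: "(rearr M f \<longlongrightarrow> (INF t\<in>{0..}. rearr M f t)) at_top"
proof (rule decreasing_tendsto)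
  show "\<forall>\<^sub>F t in at_top. (INF t\<in>{0..}. rearr M f t) \<le> rearr M f t"
    using eventually_ge_at_top[of "0::real"] by eventually_elim (simp add: INF_lower)
  fix y assume "(INF t\<in>{0..}. rearr M f t) < y"
  then obtain t0 where t0: "rearr M f t0 < y" by (auto simp: INF_less_iff)
  from eventually_ge_at_top[of t0] show "\<forall>\<^sub>F t in at_top. rearr M f t < y"
    by eventually_elim (use t0 in \<open>meson le_less_trans rearr_antimono\<close>)
qed

lemma rearr_inf_eq_INF: "rearr_inf M f = (INF t\<in>{0..}. rearr M f t)"
  unfolding rearr_inf_def by (intro tendsto_Lim rearr_tendsto_INF) simp

lemma rearr_inf_finite_measure:
  assumes "emeasure M (space M) < \<infinity>"
  shows "rearr_inf M f = 0"
proof -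
  obtain m where m: "emeasure M (space M) = ennreal m" "0 \<le> m"
    using assms ennreal_cases[of "emeasure M (space M)"] by auto
  have "rearr_inf M f \<le> rearr M f m"
    unfolding rearr_inf_eq_INF using m(2) by (intro INF_lower) simp
  also have "\<dots> = 0"
    using m(1) by (intro rearr_eq_0_if_space_le) simp
  finally show ?thesis by simp
qed

lemma rearr_inf_pos_lower_bound:
  assumes "rearr_inf M f \<noteq> 0"
  obtains d :: real where "d > 0" "\<And>t. t \<ge> 0 \<Longrightarrow> ennreal d \<le> rearr M f t"
proof -
  have "0 < rearr_inf M f" using assms by (simp add: zero_less_iff_neq_zero)
  then obtain r where r: "0 < r" "r < rearr_inf M f" using dense by blast
  then obtain d where d: "r = ennreal d" "0 < d"
    by (cases r) (auto simp: top_unique dest: less_imp_le)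
  have "ennreal d \<le> rearr M f t" if "t \<ge> 0" for t
  proof -
    have "ennreal d \<le> rearr_inf M f"
      using r(2) d(1) by simp
    also have "\<dots> \<le> rearr M f t"
      unfolding rearr_inf_eq_INF using that by (intro INF_lower) simp
    finally show ?thesis .
  qed
  with d(2) that show ?thesis by blast
qed

lemma symmetric_space_rearr_eq:
  assumes "symmetric_space M E N" "f \<in> E"
    and "f \<in> borel_measurable M" "g \<in> borel_measurable M" "rearr M f = rearr M g"
  shows "g \<in> E" "N g = N f"
proof -
  show gE: "g \<in> E"
    using assms unfolding symmetric_space_def by auto
  then show "N g = N f"
    using assms unfolding symmetric_space_def by (metis order.refl order_antisym)
qed

text \<open>A set A carrying the full (hence infinite) measure but missing a non-null set
  makes d\<cdot>\<chi>(A) equimeasurable with the constant d although it is strictly smaller.\<close>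

lemma symmetric_strictly_monotone_rearr_inf_eq_0:
  assumes sym: "symmetric_space M E N" and strict: "strictly_monotone M E N"
    and A: "A \<in> sets M" "emeasure M A = emeasure M (space M)" "emeasure M (space M - A) \<noteq> 0"
    and "f \<in> E"
  shows "rearr_inf M f = 0"
proof (rule ccontr)
  assume "rearr_inf M f \<noteq> 0"
  then obtain d where d: "d > 0" "\<And>t. t \<ge> 0 \<Longrightarrow> ennreal d \<le> rearr M f t"
    using rearr_inf_pos_lower_bound by metis
  define c where "c = (\<lambda>_::real. d)"
  define h where "h = (\<lambda>x. if x \<in> A then d else 0)"
  have A_space: "A \<subseteq> space M" using A(1) by (rule sets.sets_into_space)
  have c_meas: "c \<in> borel_measurable M" by (simp add: c_def)
  have h_meas: "h \<in> borel_measurable M"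
    unfolding h_def using A(1) by (intro measurable_If_set) auto
  have "\<forall>t\<ge>0. rearr M c t \<le> rearr M f t"
    using rearr_const_le[of M d] d by (auto simp: c_def intro: order_trans)
  then have cE: "c \<in> E"
    using sym[unfolded symmetric_space_def, rule_format, OF \<open>f \<in> E\<close> c_meas] by simp
  have "rearr M c = rearr M h"
  proof (rule rearr_eq_if_equimeasurable)
    fix s
    show "emeasure M {x \<in> space M. s < ennreal \<bar>c x\<bar>}
        = emeasure M {x \<in> space M. s < ennreal \<bar>h x\<bar>}"
    proof (cases "s < ennreal d")
      case True
      then have "{x \<in> space M. s < ennreal \<bar>h x\<bar>} = A"
        using A_space d(1) by (auto simp: h_def)
      with True A(2) d(1) show ?thesis by (simp add: c_def)
    next
      case False
      then have "{x \<in> space M. s < ennreal \<bar>h x\<bar>} = {}" "{x \<in> space M. s < ennreal \<bar>c x\<bar>} = {}"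
        using d(1) by (auto simp: c_def h_def not_less)
      then show ?thesis by (simp only:)
    qed
  qed
  then have hE: "h \<in> E" and "N h = N c"
    using symmetric_space_rearr_eq[OF sym cE c_meas h_meas] by blast+
  have below: "AE x in M. 0 \<le> h x \<and> h x \<le> c x"
    using d(1) by (simp add: h_def c_def)
  have not_ae_eq: "\<not> (AE x in M. h x = c x)"
  proof
    assume "AE x in M. h x = c x"
    moreover have "{x \<in> space M. h x \<noteq> c x} = space M - A"
      using d(1) by (auto simp: h_def c_def)
    ultimately show False
      using A by (simp add: AE_iff_measurable[OF _ refl])
  qed
  have "N h < N c"
    using strict[unfolded strictly_monotone_def, rule_format, OF hE cE below not_ae_eq] .
  with \<open>N h = N c\<close> show False by simp
qed

lemma emeasure_lborel_atLeast: "emeasure lborel {a::real..} = \<infinity>"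
proof (rule ccontr)
  assume "emeasure lborel {a..} \<noteq> \<infinity>"
  then obtain m where m: "emeasure lborel {a..} = ennreal m" "0 \<le> m"
    using ennreal_cases[of "emeasure lborel {a..}"] by auto
  have "ennreal (m + 1) = emeasure lborel {a..a + m + 1}"
    using m(2) by simp
  also have "\<dots> \<le> emeasure lborel {a..}"
    by (intro emeasure_mono) auto
  finally show False
    using m by (simp add: ennreal_le_iff)
qed

lemma space_lebI: "space (lebI \<alpha>) = interval0 \<alpha>"
  by (simp add: lebI_def space_restrict_space)

lemma sets_lborel_interval0: "interval0 \<alpha> \<in> sets lborel"
  unfolding interval0_def by measurable

lemma emeasure_lebI:
  assumes "A \<subseteq> interval0 \<alpha>"
  shows "emeasure (lebI \<alpha>) A = emeasure lborel A"
  unfolding lebI_def using assms sets_lborel_interval0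
  by (intro emeasure_restrict_space) auto

lemma interval0_infinity: "interval0 \<infinity> = {0..}"
  by (auto simp: interval0_def)

lemma emeasure_space_lebI_finite: "emeasure (lebI (ereal a)) (space (lebI (ereal a))) < \<infinity>"
proof -
  have "emeasure (lebI (ereal a)) (space (lebI (ereal a))) = emeasure lborel (interval0 (ereal a))"
    by (simp add: space_lebI emeasure_lebI)
  also have "\<dots> \<le> emeasure lborel {0..max a 0}"
    by (intro emeasure_mono) (auto simp: interval0_def)
  also have "\<dots> < \<infinity>"
    by simp
  finally show ?thesis .
qed

lemma lebI_infinity_split:
  "{1..} \<in> sets (lebI \<infinity>)"
  "emeasure (lebI \<infinity>) {1..} = emeasure (lebI \<infinity>) (space (lebI \<infinity>))"
  "emeasure (lebI \<infinity>) (space (lebI \<infinity>) - {1..}) \<noteq> 0"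
proof -
  have sub: "{1::real..} \<subseteq> interval0 \<infinity>"
    by (auto simp: interval0_infinity)
  show "{1..} \<in> sets (lebI \<infinity>)"
    unfolding lebI_def using sub sets_lborel_interval0
    by (subst sets_restrict_space_iff) auto
  show "emeasure (lebI \<infinity>) {1..} = emeasure (lebI \<infinity>) (space (lebI \<infinity>))"
    unfolding space_lebI emeasure_lebI[OF sub] emeasure_lebI[OF order.refl]
    by (simp only: interval0_infinity emeasure_lborel_atLeast)
  have "space (lebI \<infinity>) - {1..} = {0..<1::real}"
    by (auto simp: space_lebI interval0_infinity)
  moreover have "emeasure (lebI \<infinity>) {0..<1::real} = 1"
    by (subst emeasure_lebI) (auto simp: interval0_infinity)
  ultimately show "emeasure (lebI \<infinity>) (space (lebI \<infinity>) - {1..}) \<noteq> 0"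
    by simp
qed

theorem mainTheorem12:
  fixes \<alpha> :: ereal and E :: "(real \<Rightarrow> real) set" and N :: "(real \<Rightarrow> real) \<Rightarrow> real"
  assumes "0 < \<alpha>"
    and "banach_function_space (lebI \<alpha>) E N"
    and "symmetric_space (lebI \<alpha>) E N"
    and "strictly_monotone (lebI \<alpha>) E N"
  shows "E = E0 (lebI \<alpha>) E"
proof -
  have "rearr_inf (lebI \<alpha>) f = 0" if "f \<in> E" for f
  proof (cases \<alpha>)
    case (real a)
    show ?thesis
      unfolding real by (rule rearr_inf_finite_measure[OF emeasure_space_lebI_finite])
  next
    case PInf
    from assms(3,4) that show ?thesis
      unfolding PInf by (rule symmetric_strictly_monotone_rearr_inf_eq_0[OF _ _ lebI_infinity_split])
  next
    case MInf
    with \<open>0 < \<alpha>\<close> show ?thesis by simp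
  qed
  then show ?thesis
    unfolding E0_def by blast
qed

end
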